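(* Let $n=1$, $\omega>0$. For $\hbar\in]0,1]$ let $a^\hbar$ solve $$ i\hbar\partial_t a^\hbar+\frac{\hbar^2}{2}\partial_x^2a^\hbar=\frac{\omega^2}{2}x^2a^\hbar+\hbar^2F^\hbar(a^\hbar)+\hbar^2S^\hbar,\qquad a^\hbar_{\mid t=0}=0.$$ Assume that there exists $C_0>0$ such that for all $t<\pi/(2\omega)$, $$\|F^\hbar(a^\hbar)(t)\|_{L^2}\leq\frac{C_0}{\left(\frac{\pi}{2\omega}-t\right)^2}\|a^\hbar(t)\|_{L^2}.$$ Then there exists $C>0$ independent of $\hbar\in]0,1]$ such that for every $\Lambda\geq1$, $$\sup_{0\leq t\leq\frac{\pi}{2\omega}-\Lambda\hbar}\|a^\hbar(t)\|_{L^2}\leq C\hbar\int_0^{\pi/(2\omega)-\Lambda\hbar}\|S^\hbar(t)\|_{L^2}\,dt.$$ *)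

theory Defs
  imports "HOL-Analysis.Analysis"
begin

definition sq_int :: "(real \<Rightarrow> complex) \<Rightarrow> bool" where
  "sq_int f \<longleftrightarrow> f \<in> borel_measurable lborel \<and> integrable lborel (\<lambda>x. (cmod (f x))\<^sup>2)"

definition L2norm :: "(real \<Rightarrow> complex) \<Rightarrow> real" where
  "L2norm f = sqrt (\<integral>x. (cmod (f x))\<^sup>2 \<partial>lborel)"

text \<open>Strong solution on the time interval [0,T) of
  i h d_t a + h^2/2 d_x^2 a = omega^2/2 x^2 a + h^2 G + h^2 S,  a(0) = 0,
  where G stands for the nonlinear term F^h(a^h).  Here dt, dx, dxx are the
  (classical) partial derivatives; the solution is required to lie, at each time,
  in the natural energy space (a, d_x a, d_x^2 a, x^2 a in L2) and to be
  differentiable in time as an L2-valued curve; the source is jointly measurable.\<close>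

definition harmonic_solution ::
  "real \<Rightarrow> real \<Rightarrow> real \<Rightarrow> (real \<Rightarrow> real \<Rightarrow> complex) \<Rightarrow> (real \<Rightarrow> real \<Rightarrow> complex)
     \<Rightarrow> (real \<Rightarrow> real \<Rightarrow> complex) \<Rightarrow> bool" where
  "harmonic_solution \<omega> h T a G S \<longleftrightarrow>
    (\<exists>dt dx dxx :: real \<Rightarrow> real \<Rightarrow> complex.
      (\<forall>x. a 0 x = 0) \<and>
      (\<forall>t\<in>{0..<T}. \<forall>x. ((\<lambda>s. a s x) has_vector_derivative dt t x) (at t within {0..<T})) \<and>
      (\<forall>t\<in>{0..<T}. \<forall>x. ((a t) has_vector_derivative dx t x) (at x)
                         \<and> ((dx t) has_vector_derivative dxx t x) (at x)) \<and>
      (\<forall>t\<in>{0..<T}. \<forall>x.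
          \<i> * complex_of_real h * dt t x + complex_of_real (h\<^sup>2 / 2) * dxx t x
          = complex_of_real (\<omega>\<^sup>2 / 2 * x\<^sup>2) * a t x
            + complex_of_real (h\<^sup>2) * G t x + complex_of_real (h\<^sup>2) * S t x) \<and>
      (\<forall>t\<in>{0..<T}. sq_int (a t) \<and> sq_int (dx t) \<and> sq_int (dxx t)
                     \<and> sq_int (\<lambda>x. complex_of_real (x\<^sup>2) * a t x)
                     \<and> sq_int (dt t) \<and> sq_int (G t) \<and> sq_int (S t)) \<and>
      (\<forall>t\<in>{0..<T}.
          ((\<lambda>s. L2norm (\<lambda>x. (a s x - a t x) / complex_of_real (s - t) - dt t x))
             \<longlongrightarrow> 0) (at t within {0..<T})) \<and>
      (\<lambda>p. S (fst p) (snd p)) \<in> borel_measurable (lborel \<Otimes>\<^sub>M lborel))"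

end

theory Submission
  imports Defs
begin

text \<open>Multiplying the equation by \<open>cnj a\<close>, integrating in \<open>x\<close> and taking imaginary parts
  removes the kinetic term (integration by parts) and the real harmonic potential, leaving the
  energy inequality \<open>d/dt \<parallel>a\<parallel>\<^sup>2 \<le> 2 h (\<parallel>F\<parallel> + \<parallel>S\<parallel>) \<parallel>a\<parallel>\<close>.  With the assumed bound on \<open>F\<close>
  this is a Gronwall inequality for \<open>\<parallel>a\<parallel>\<close> whose coefficient \<open>h C0 / (T - t)\<^sup>2\<close> is singular at
  \<open>T = \<pi> / (2 \<omega>)\<close>; its integrating factor is \<open>exp (h C0 / (T - t))\<close>.  As long as
  \<open>T - t \<ge> \<Lambda> h \<ge> h\<close>, this factor is at most \<open>exp C0\<close>, uniformly in \<open>h\<close>.\<close>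

section \<open>Square-integrable functions on the line\<close>

lemma sq_intD:
  assumes "sq_int f"
  shows "f \<in> borel_measurable lborel" "integrable lborel (\<lambda>x. (cmod (f x))\<^sup>2)"
  using assms unfolding sq_int_def by auto

lemma cmod_add_power2_le: "(cmod (a + b))\<^sup>2 \<le> 2 * (cmod a)\<^sup>2 + 2 * (cmod b)\<^sup>2"
proof -
  have "(cmod (a + b))\<^sup>2 \<le> (cmod a + cmod b)\<^sup>2"
    by (simp add: norm_triangle_ineq power_mono)
  also have "\<dots> \<le> 2 * (cmod a)\<^sup>2 + 2 * (cmod b)\<^sup>2"
    using sum_squares_bound[of "cmod a" "cmod b"] by (simp add: power2_eq_square algebra_simps)
  finally show ?thesis .
qed

lemma sq_int_add:
  assumes "sq_int f" "sq_int g"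
  shows "sq_int (\<lambda>x. f x + g x)"
proof -
  have meas: "(\<lambda>x. f x + g x) \<in> borel_measurable lborel"
    using sq_intD(1)[OF assms(1)] sq_intD(1)[OF assms(2)] by auto
  have "integrable lborel (\<lambda>x. (cmod (f x + g x))\<^sup>2)"
  proof (rule Bochner_Integration.integrable_bound)
    show "integrable lborel (\<lambda>x. 2 * (cmod (f x))\<^sup>2 + 2 * (cmod (g x))\<^sup>2)"
      using sq_intD(2)[OF assms(1)] sq_intD(2)[OF assms(2)] by auto
    show "AE x in lborel. norm ((cmod (f x + g x))\<^sup>2) \<le> norm (2 * (cmod (f x))\<^sup>2 + 2 * (cmod (g x))\<^sup>2)"
      by (simp add: cmod_add_power2_le)
  qed (use meas in measurable)
  with meas show ?thesis
    unfolding sq_int_def by auto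
qed

lemma sq_int_cmult:
  assumes "sq_int f"
  shows "sq_int (\<lambda>x. c * f x)"
proof -
  have "integrable lborel (\<lambda>x. (cmod c)\<^sup>2 * (cmod (f x))\<^sup>2)"
    using sq_intD(2)[OF assms] by auto
  moreover have "(\<lambda>x. c * f x) \<in> borel_measurable lborel"
    using sq_intD(1)[OF assms] by auto
  ultimately show ?thesis
    unfolding sq_int_def by (simp add: norm_mult power_mult_distrib)
qed

lemma sq_int_diff: "sq_int f \<Longrightarrow> sq_int g \<Longrightarrow> sq_int (\<lambda>x. f x - g x)"
  using sq_int_add[of f "\<lambda>x. -1 * g x"] sq_int_cmult[of g "-1"] by simp

lemma sq_int_divide: "sq_int f \<Longrightarrow> sq_int (\<lambda>x. f x / c)"
  using sq_int_cmult[of f "inverse c"] by (simp add: field_simps)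

lemma L2norm_nonneg: "0 \<le> L2norm f"
  unfolding L2norm_def by (simp add: integral_nonneg_AE)

lemma L2norm_power2: "(L2norm f)\<^sup>2 = (\<integral>x. (cmod (f x))\<^sup>2 \<partial>lborel)"
  unfolding L2norm_def by (simp add: integral_nonneg_AE)

lemma L2norm_add_power2_le:
  assumes "sq_int f" "sq_int g"
  shows "(L2norm (\<lambda>x. f x + g x))\<^sup>2 \<le> 2 * (L2norm f)\<^sup>2 + 2 * (L2norm g)\<^sup>2"
proof -
  have "(\<integral>x. (cmod (f x + g x))\<^sup>2 \<partial>lborel) \<le> (\<integral>x. 2 * (cmod (f x))\<^sup>2 + 2 * (cmod (g x))\<^sup>2 \<partial>lborel)"
    using sq_intD(2)[OF sq_int_add[OF assms]] sq_intD(2)[OF assms(1)] sq_intD(2)[OF assms(2)]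
    by (intro integral_mono) (auto simp: cmod_add_power2_le)
  then show ?thesis
    using sq_intD(2)[OF assms(1)] sq_intD(2)[OF assms(2)] by (simp add: L2norm_power2)
qed

lemma integrable_cmod_mult:
  assumes "sq_int f" "sq_int g"
  shows "integrable lborel (\<lambda>x. cmod (f x) * cmod (g x))"
proof (rule Bochner_Integration.integrable_bound)
  show "integrable lborel (\<lambda>x. (cmod (f x))\<^sup>2 + (cmod (g x))\<^sup>2)"
    using assms by (auto dest: sq_intD)
  show "AE x in lborel. norm (cmod (f x) * cmod (g x)) \<le> norm ((cmod (f x))\<^sup>2 + (cmod (g x))\<^sup>2)"
  proof (rule AE_I2)
    fix x
    show "norm (cmod (f x) * cmod (g x)) \<le> norm ((cmod (f x))\<^sup>2 + (cmod (g x))\<^sup>2)"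
      using sum_squares_bound[of "cmod (f x)" "cmod (g x)"]
      by (simp add: mult.assoc) (smt (verit) mult_nonneg_nonneg norm_ge_zero)
  qed
qed (use sq_intD(1)[OF assms(1)] sq_intD(1)[OF assms(2)] in measurable)

lemma Cauchy_Schwarz_L2norm:
  assumes "sq_int f" "sq_int g"
  shows "(\<integral>x. cmod (f x) * cmod (g x) \<partial>lborel) \<le> L2norm f * L2norm g"
proof -
  define P where "P = (\<integral>x. cmod (f x) * cmod (g x) \<partial>lborel)"
  define A where "A = (\<integral>x. (cmod (f x))\<^sup>2 \<partial>lborel)"
  define B where "B = (\<integral>x. (cmod (g x))\<^sup>2 \<partial>lborel)"
  have "(\<integral>\<^sup>+x. ennreal (cmod (f x)) * ennreal (cmod (g x)) \<partial>lborel)\<^sup>2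
      \<le> (\<integral>\<^sup>+x. ennreal (cmod (f x)) ^ 2 \<partial>lborel) * (\<integral>\<^sup>+x. ennreal (cmod (g x)) ^ 2 \<partial>lborel)"
    using assms by (intro Cauchy_Schwarz_nn_integral) (auto dest: sq_intD)
  moreover have "(\<integral>\<^sup>+x. ennreal (cmod (f x)) * ennreal (cmod (g x)) \<partial>lborel) = ennreal P"
    unfolding P_def using integrable_cmod_mult[OF assms]
    by (subst nn_integral_eq_integral[symmetric]) (auto simp: ennreal_mult)
  moreover have "(\<integral>\<^sup>+x. ennreal (cmod (f x)) ^ 2 \<partial>lborel) = ennreal A"
    unfolding A_def using sq_intD(2)[OF assms(1)]
    by (subst nn_integral_eq_integral[symmetric]) (auto simp: ennreal_power)
  moreover have "(\<integral>\<^sup>+x. ennreal (cmod (g x)) ^ 2 \<partial>lborel) = ennreal B"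
    unfolding B_def using sq_intD(2)[OF assms(2)]
    by (subst nn_integral_eq_integral[symmetric]) (auto simp: ennreal_power)
  moreover have "0 \<le> P" "0 \<le> A" "0 \<le> B"
    unfolding P_def A_def B_def by (auto intro: integral_nonneg_AE)
  ultimately have "P\<^sup>2 \<le> A * B"
    by (simp add: ennreal_power ennreal_mult[symmetric])
  then have "P \<le> sqrt (A * B)"
    by (simp add: real_le_rsqrt)
  then show ?thesis
    unfolding P_def A_def B_def L2norm_def by (simp add: real_sqrt_mult)
qed

lemma integrable_if_bounded_by_cmod_mult:
  fixes \<phi> :: "real \<Rightarrow> real"
  assumes "sq_int f" "sq_int g" "\<phi> \<in> borel_measurable lborel"
    and "\<And>x. \<bar>\<phi> x\<bar> \<le> cmod (f x) * cmod (g x)"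
  shows "integrable lborel \<phi>"
  using integrable_cmod_mult[OF assms(1,2)] assms(3)
  by (rule Bochner_Integration.integrable_bound) (use assms(4) in \<open>auto simp: abs_mult\<close>)

lemma abs_integral_le_L2norm_mult:
  fixes \<phi> :: "real \<Rightarrow> real"
  assumes "sq_int f" "sq_int g" "\<phi> \<in> borel_measurable lborel"
    and "\<And>x. \<bar>\<phi> x\<bar> \<le> cmod (f x) * cmod (g x)"
  shows "\<bar>\<integral>x. \<phi> x \<partial>lborel\<bar> \<le> L2norm f * L2norm g"
proof -
  have "\<bar>\<integral>x. \<phi> x \<partial>lborel\<bar> \<le> (\<integral>x. \<bar>\<phi> x\<bar> \<partial>lborel)"
    using integral_norm_bound[of lborel \<phi>] by simp
  also have "\<dots> \<le> (\<integral>x. cmod (f x) * cmod (g x) \<partial>lborel)"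
    using integrable_if_bounded_by_cmod_mult[OF assms] integrable_cmod_mult[OF assms(1,2)] assms(4)
    by (intro integral_mono) auto
  also have "\<dots> \<le> L2norm f * L2norm g"
    by (rule Cauchy_Schwarz_L2norm[OF assms(1,2)])
  finally show ?thesis .
qed

lemma abs_Re_mult_cnj_le: "\<bar>Re (a * cnj b)\<bar> \<le> cmod a * cmod b"
  using abs_Re_le_cmod[of "a * cnj b"] by (simp add: norm_mult)

lemma abs_Im_mult_cnj_le: "\<bar>Im (a * cnj b)\<bar> \<le> cmod a * cmod b"
  using abs_Im_le_cmod[of "a * cnj b"] by (simp add: norm_mult)

lemma
  assumes "sq_int f" "sq_int g"
  shows integrable_Re_mult_cnj: "integrable lborel (\<lambda>x. Re (f x * cnj (g x)))"
    and integrable_Im_mult_cnj: "integrable lborel (\<lambda>x. Im (f x * cnj (g x)))"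
    and abs_integral_Re_mult_cnj_le: "\<bar>\<integral>x. Re (f x * cnj (g x)) \<partial>lborel\<bar> \<le> L2norm f * L2norm g"
    and abs_integral_Im_mult_cnj_le: "\<bar>\<integral>x. Im (f x * cnj (g x)) \<partial>lborel\<bar> \<le> L2norm f * L2norm g"
proof -
  have meas: "(\<lambda>x. Re (f x * cnj (g x))) \<in> borel_measurable lborel"
    "(\<lambda>x. Im (f x * cnj (g x))) \<in> borel_measurable lborel"
    using sq_intD(1)[OF assms(1)] sq_intD(1)[OF assms(2)] by auto
  show "integrable lborel (\<lambda>x. Re (f x * cnj (g x)))"
    "\<bar>\<integral>x. Re (f x * cnj (g x)) \<partial>lborel\<bar> \<le> L2norm f * L2norm g"
    using integrable_if_bounded_by_cmod_mult[OF assms meas(1) abs_Re_mult_cnj_le]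
      abs_integral_le_L2norm_mult[OF assms meas(1) abs_Re_mult_cnj_le] by auto
  show "integrable lborel (\<lambda>x. Im (f x * cnj (g x)))"
    "\<bar>\<integral>x. Im (f x * cnj (g x)) \<partial>lborel\<bar> \<le> L2norm f * L2norm g"
    using integrable_if_bounded_by_cmod_mult[OF assms meas(2) abs_Im_mult_cnj_le]
      abs_integral_le_L2norm_mult[OF assms meas(2) abs_Im_mult_cnj_le] by auto
qed

section \<open>Integrals of derivatives over the line\<close>

lemma integrable_tendsto_at_top_imp_0:
  fixes g :: "real \<Rightarrow> real"
  assumes g: "integrable lborel g" and lim: "(g \<longlongrightarrow> L) at_top"
  shows "L = 0"
proof (rule ccontr)
  assume "L \<noteq> 0"
  then have "\<forall>\<^sub>F x in at_top. \<bar>L\<bar> / 2 < \<bar>g x\<bar>"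
    using order_tendstoD(1)[OF tendsto_rabs[OF lim], of "\<bar>L\<bar> / 2"] by simp
  then obtain B where B: "\<And>x. B \<le> x \<Longrightarrow> \<bar>L\<bar> / 2 < \<bar>g x\<bar>"
    by (auto simp: eventually_at_top_linorder)
  define I where "I = (\<integral>x. \<bar>g x\<bar> \<partial>lborel)"
  define b where "b = B + 2 * (I + 1) / \<bar>L\<bar>"
  have "I \<ge> 0"
    unfolding I_def by (simp add: integral_nonneg_AE)
  then have Bb: "B \<le> b" and gap: "\<bar>L\<bar> / 2 * (b - B) = I + 1"
    using \<open>L \<noteq> 0\<close> unfolding b_def by auto
  have int_abs: "set_integrable lborel {B..b} (\<lambda>x. \<bar>g x\<bar>)"
    using g unfolding set_integrable_def by (intro integrable_mult_indicator) auto
  have int_const: "set_integrable lborel {B..b} (\<lambda>_. \<bar>L\<bar> / 2)"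
    unfolding set_integrable_def
    by (intro integrable_scaleR_left integrable_real_indicator) (auto simp: emeasure_lborel_Icc_eq)
  have "I + 1 = (LINT x:{B..b}|lborel. \<bar>L\<bar> / 2)"
    using Bb gap by (simp add: set_integral_const mult.commute)
  also have "\<dots> \<le> (LINT x:{B..b}|lborel. \<bar>g x\<bar>)"
    using B int_abs int_const by (intro set_integral_mono) (auto simp: less_imp_le)
  also have "\<dots> \<le> I"
    using int_abs g unfolding I_def set_lebesgue_integral_def set_integrable_def
    by (intro integral_mono) (auto split: split_indicator)
  finally show False
    by simp
qed

lemma integrable_tendsto_at_bot_imp_0:
  fixes g :: "real \<Rightarrow> real"
  assumes "integrable lborel g" and "(g \<longlongrightarrow> L) at_bot"
  shows "L = 0"
proof (rule integrable_tendsto_at_top_imp_0)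
  show "integrable lborel (\<lambda>x. g (- x))"
    using lborel_integrable_real_affine_iff[of "-1" g 0] assms(1) by simp
  show "((\<lambda>x. g (- x)) \<longlongrightarrow> L) at_top"
    using assms(2) by (simp add: at_bot_mirror filterlim_filtermap)
qed

lemma set_integral_deriv_Icc:
  fixes g g' :: "real \<Rightarrow> real"
  assumes der: "\<And>x. (g has_real_derivative g' x) (at x)"
    and int: "integrable lborel g'" and "a \<le> b"
  shows "(LINT x:{a..b}|lborel. g' x) = g b - g a"
proof -
  have "set_integrable lborel {a..b} g'"
    unfolding set_integrable_def using int by (intro integrable_mult_indicator) auto
  moreover have "(g' has_integral (g b - g a)) {a..b}"
    using der \<open>a \<le> b\<close>
    by (intro fundamental_theorem_of_calculus)
       (auto simp: has_real_derivative_iff_has_vector_derivative intro: has_vector_derivative_at_within)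
  ultimately show ?thesis
    using set_borel_integral_eq_integral(2) integral_unique by metis
qed

lemma integral_deriv_eq_0:
  fixes g g' :: "real \<Rightarrow> real"
  assumes der: "\<And>x. (g has_real_derivative g' x) (at x)"
    and g: "integrable lborel g" and g': "integrable lborel g'"
  shows "(\<integral>x. g' x \<partial>lborel) = 0"
proof -
  \<comment> \<open>By the fundamental theorem \<open>g\<close> has limits at \<open>\<plusminus>\<infinity>\<close>; they vanish since \<open>g\<close> is integrable.\<close>
  have int_Ici: "set_integrable lborel {0..} g'" and int_Iic: "set_integrable lborel {..0} g'"
    unfolding set_integrable_def using g' by (intro integrable_mult_indicator; simp)+
  define P where "P = (LINT x:{0..}|lborel. g' x)"
  define Q where "Q = (LINT x:{..0}|lborel. g' x)"
  have "((\<lambda>b. g 0 + (LINT x:{0..b}|lborel. g' x)) \<longlongrightarrow> g 0 + P) at_top"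
    unfolding P_def by (intro tendsto_intros tendsto_set_lebesgue_integral_at_top int_Ici) auto
  moreover have "\<forall>\<^sub>F b in at_top. g 0 + (LINT x:{0..b}|lborel. g' x) = g b"
    using eventually_ge_at_top[of 0] by eventually_elim (simp add: set_integral_deriv_Icc[OF der g'])
  ultimately have "(g \<longlongrightarrow> g 0 + P) at_top"
    by (rule Lim_transform_eventually)
  then have P: "g 0 + P = 0"
    by (rule integrable_tendsto_at_top_imp_0[OF g])
  have "((\<lambda>a. g 0 - (LINT x:{a..0}|lborel. g' x)) \<longlongrightarrow> g 0 - Q) at_bot"
    unfolding Q_def by (intro tendsto_intros tendsto_set_lebesgue_integral_at_bot int_Iic) auto
  moreover have "\<forall>\<^sub>F a in at_bot. g 0 - (LINT x:{a..0}|lborel. g' x) = g a"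
    using eventually_le_at_bot[of 0] by eventually_elim (simp add: set_integral_deriv_Icc[OF der g'])
  ultimately have "(g \<longlongrightarrow> g 0 - Q) at_bot"
    by (rule Lim_transform_eventually)
  then have Q: "g 0 - Q = 0"
    by (rule integrable_tendsto_at_bot_imp_0[OF g])
  have "{..0} \<union> {0..} = (UNIV :: real set)"
    by auto
  then have "(\<integral>x. g' x \<partial>lborel) = (LINT x:{..0} \<union> {0..}|lborel. g' x)"
    by (simp add: set_lebesgue_integral_def)
  also have "\<dots> = Q + P"
    unfolding P_def Q_def using AE_lborel_singleton[of 0]
    by (intro set_integral_Un_AE int_Ici int_Iic) auto
  finally show ?thesis
    using P Q by simp
qed

lemma integral_Im_second_deriv_mult_cnj_eq_0:
  assumes f': "\<And>x. (f has_vector_derivative f' x) (at x)"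
    and f'': "\<And>x. (f' has_vector_derivative f'' x) (at x)"
    and "sq_int f" "sq_int f'" "sq_int f''"
  shows "(\<integral>x. Im (f'' x * cnj (f x)) \<partial>lborel) = 0"
proof (rule integral_deriv_eq_0)
  fix x
  \<comment> \<open>\<open>(f' cnj f)' = \<bar>f'\<bar>\<^sup>2 + f'' cnj f\<close>, whose first summand is real.\<close>
  have "((\<lambda>x. f' x * cnj (f x)) has_vector_derivative f' x * cnj (f' x) + f'' x * cnj (f x)) (at x)"
    by (intro has_vector_derivative_mult has_vector_derivative_cnj f' f'')
  then show "((\<lambda>x. Im (f' x * cnj (f x))) has_real_derivative Im (f'' x * cnj (f x))) (at x)"
    by (simp add: has_vector_derivative_complex_iff)
next
  show "integrable lborel (\<lambda>x. Im (f' x * cnj (f x)))"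
    "integrable lborel (\<lambda>x. Im (f'' x * cnj (f x)))"
    by (fact integrable_Im_mult_cnj[OF assms(4,3)] integrable_Im_mult_cnj[OF assms(5,3)])+
qed

section \<open>Time derivative of the squared norm\<close>

lemma L2norm_add_scaled_power2:
  fixes f w :: "real \<Rightarrow> complex" and c :: real
  assumes "sq_int f" "sq_int w"
  shows "(L2norm (\<lambda>x. f x + c * w x))\<^sup>2
    = (L2norm f)\<^sup>2 + 2 * c * (\<integral>x. Re (w x * cnj (f x)) \<partial>lborel) + c\<^sup>2 * (L2norm w)\<^sup>2"
proof -
  have "(cmod (f x + c * w x))\<^sup>2 = (cmod (f x))\<^sup>2 + 2 * c * Re (w x * cnj (f x)) + c\<^sup>2 * (cmod (w x))\<^sup>2"
    for x
    unfolding cmod_power2 by (simp add: power2_eq_square algebra_simps)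
  then show ?thesis
    using sq_intD(2)[OF assms(1)] sq_intD(2)[OF assms(2)] integrable_Re_mult_cnj[OF assms(2,1)]
    by (simp add: L2norm_power2)
qed

lemma L2norm_power2_difference_quotient_le:
  fixes c :: real
  assumes f: "sq_int f" and g: "sq_int g" and v: "sq_int v" and "c \<noteq> 0"
  defines "E \<equiv> L2norm (\<lambda>x. (g x - f x) / complex_of_real c - v x)"
  shows "\<bar>((L2norm g)\<^sup>2 - (L2norm f)\<^sup>2) / c - 2 * (\<integral>x. Re (v x * cnj (f x)) \<partial>lborel)\<bar>
    \<le> 2 * E * L2norm f + \<bar>c\<bar> * (2 * (L2norm v)\<^sup>2 + 2 * E\<^sup>2)"
proof -
  define e where "e x = (g x - f x) / complex_of_real c - v x" for x
  have e: "sq_int e"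
    unfolding e_def using f g v by (intro sq_int_diff sq_int_divide)
  have ve: "sq_int (\<lambda>x. v x + e x)"
    using v e by (rule sq_int_add)
  have "g = (\<lambda>x. f x + complex_of_real c * (v x + e x))"
    using \<open>c \<noteq> 0\<close> unfolding e_def by (auto simp: field_simps)
  then have "(L2norm g)\<^sup>2 = (L2norm f)\<^sup>2 + 2 * c * (\<integral>x. Re ((v x + e x) * cnj (f x)) \<partial>lborel)
      + c\<^sup>2 * (L2norm (\<lambda>x. v x + e x))\<^sup>2"
    by (simp only: L2norm_add_scaled_power2[OF f ve])
  also have "(\<integral>x. Re ((v x + e x) * cnj (f x)) \<partial>lborel)
      = (\<integral>x. Re (v x * cnj (f x)) \<partial>lborel) + (\<integral>x. Re (e x * cnj (f x)) \<partial>lborel)"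
    using integrable_Re_mult_cnj[OF v f] integrable_Re_mult_cnj[OF e f] by (simp add: distrib_right)
  finally have "((L2norm g)\<^sup>2 - (L2norm f)\<^sup>2) / c - 2 * (\<integral>x. Re (v x * cnj (f x)) \<partial>lborel)
      = 2 * (\<integral>x. Re (e x * cnj (f x)) \<partial>lborel) + c * (L2norm (\<lambda>x. v x + e x))\<^sup>2"
    using \<open>c \<noteq> 0\<close> by (simp add: power2_eq_square field_simps)
  also have "\<bar>\<dots>\<bar> \<le> 2 * \<bar>\<integral>x. Re (e x * cnj (f x)) \<partial>lborel\<bar> + \<bar>c\<bar> * (L2norm (\<lambda>x. v x + e x))\<^sup>2"
    by (simp add: abs_mult abs_triangle_ineq[THEN order_trans])
  also have "\<dots> \<le> 2 * E * L2norm f + \<bar>c\<bar> * (2 * (L2norm v)\<^sup>2 + 2 * E\<^sup>2)"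
    unfolding E_def e_def[symmetric]
    using abs_integral_Re_mult_cnj_le[OF e f] L2norm_add_power2_le[OF v e]
    by (intro add_mono mult_left_mono) auto
  finally show ?thesis .
qed

lemma L2norm_power2_has_derivative:
  fixes u :: "real \<Rightarrow> real \<Rightarrow> complex"
  assumes u: "\<And>s. s \<in> D \<Longrightarrow> sq_int (u s)" and "t \<in> D" and v: "sq_int v"
    and lim: "((\<lambda>s. L2norm (\<lambda>x. (u s x - u t x) / complex_of_real (s - t) - v x)) \<longlongrightarrow> 0) (at t within D)"
  shows "((\<lambda>s. (L2norm (u s))\<^sup>2) has_real_derivative 2 * (\<integral>x. Re (v x * cnj (u t x)) \<partial>lborel))
    (at t within D)"
proof -
  define N where "N s = (L2norm (u s))\<^sup>2" for s
  define I where "I = (\<integral>x. Re (v x * cnj (u t x)) \<partial>lborel)"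
  define E where "E s = L2norm (\<lambda>x. (u s x - u t x) / complex_of_real (s - t) - v x)" for s
  have "norm ((N s - N t) / (s - t) - 2 * I)
      \<le> 2 * E s * L2norm (u t) + \<bar>s - t\<bar> * (2 * (L2norm v)\<^sup>2 + 2 * (E s)\<^sup>2)"
    if "s \<in> D" "s \<noteq> t" for s
    unfolding N_def I_def E_def real_norm_def using \<open>s \<noteq> t\<close>
    by (intro L2norm_power2_difference_quotient_le u \<open>s \<in> D\<close> \<open>t \<in> D\<close> v) simp
  then have "\<forall>\<^sub>F s in at t within D.
      norm ((N s - N t) / (s - t) - 2 * I) \<le> 2 * E s * L2norm (u t) + \<bar>s - t\<bar> * (2 * (L2norm v)\<^sup>2 + 2 * (E s)\<^sup>2)"
    by (auto simp: eventually_at_filter intro: always_eventually)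
  moreover have "(E \<longlongrightarrow> 0) (at t within D)" and "((\<lambda>s. \<bar>s - t\<bar>) \<longlongrightarrow> 0) (at t within D)"
    unfolding E_def by (fact lim) (intro tendsto_rabs_zero LIM_zero tendsto_ident_at)
  then have "((\<lambda>s. 2 * E s * L2norm (u t) + \<bar>s - t\<bar> * (2 * (L2norm v)\<^sup>2 + 2 * (E s)\<^sup>2))
      \<longlongrightarrow> 0) (at t within D)"
    by (auto intro!: tendsto_eq_intros)
  ultimately have "((\<lambda>s. (N s - N t) / (s - t) - 2 * I) \<longlongrightarrow> 0) (at t within D)"
    by (rule Lim_null_comparison)
  then show ?thesis
    unfolding has_field_derivative_iff N_def I_def by (rule LIM_zero_cancel)
qed

section \<open>Gronwall-type bounds\<close>

lemma sqrt_le_integral_if_deriv_le: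
  fixes M M' \<phi> :: "real \<Rightarrow> real"
  assumes "0 \<le> b" and "M 0 = 0"
    and M_nonneg: "\<And>t. t \<in> {0..b} \<Longrightarrow> 0 \<le> M t"
    and \<phi>_nonneg: "\<And>t. t \<in> {0..b} \<Longrightarrow> 0 \<le> \<phi> t"
    and M': "\<And>t. t \<in> {0..b} \<Longrightarrow> (M has_real_derivative M' t) (at t within {0..b})"
    and M'_le: "\<And>t. t \<in> {0..b} \<Longrightarrow> M' t \<le> 2 * \<phi> t * sqrt (M t)"
    and \<phi>: "\<phi> integrable_on {0..b}"
  shows "sqrt (M b) \<le> integral {0..b} \<phi>"
proof (rule field_le_epsilon)
  fix e :: real
  assume "0 < e"
  \<comment> \<open>\<open>sqrt M\<close> need not be differentiable where \<open>M\<close> vanishes, so we regularise it.\<close>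
  define Q where "Q t = sqrt (M t + e\<^sup>2)" for t
  define Q' where "Q' t = M' t / (2 * sqrt (M t + e\<^sup>2))" for t
  have pos: "0 < M t + e\<^sup>2" if "t \<in> {0..b}" for t
    using M_nonneg[OF that] \<open>0 < e\<close> by (simp add: add_nonneg_pos)
  have Q': "(Q has_vector_derivative Q' t) (at t within {0..b})" if "t \<in> {0..b}" for t
  proof -
    have "((\<lambda>t. M t + e\<^sup>2) has_real_derivative M' t) (at t within {0..b})"
      using M'[OF that] by (auto intro!: derivative_eq_intros)
    then have "(Q has_real_derivative inverse (sqrt (M t + e\<^sup>2)) / 2 * M' t) (at t within {0..b})"
      unfolding Q_def[abs_def]
      by (rule DERIV_chain2[where f=sqrt and g="\<lambda>t. M t + e\<^sup>2", OF DERIV_real_sqrt[OF pos[OF that]]])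
    moreover have "inverse (sqrt (M t + e\<^sup>2)) / 2 * M' t = Q' t"
      unfolding Q'_def by (simp add: field_simps)
    ultimately show ?thesis
      by (simp add: has_real_derivative_iff_has_vector_derivative)
  qed
  have "Q' t \<le> \<phi> t" if "t \<in> {0..b}" for t
  proof -
    have "2 * \<phi> t * sqrt (M t) \<le> 2 * \<phi> t * sqrt (M t + e\<^sup>2)"
      using \<phi>_nonneg[OF that] by (intro mult_left_mono) auto
    then have "M' t \<le> 2 * \<phi> t * sqrt (M t + e\<^sup>2)"
      using M'_le[OF that] by linarith
    then show ?thesis
      unfolding Q'_def using pos[OF that] by (simp add: divide_le_eq mult_ac)
  qed
  then have "Q b - Q 0 \<le> integral {0..b} \<phi>"
    using fundamental_theorem_of_calculus[OF \<open>0 \<le> b\<close> Q'] integrable_integral[OF \<phi>]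
    by (rule has_integral_le[rotated 2])
  moreover have "Q 0 = e"
    unfolding Q_def using \<open>M 0 = 0\<close> \<open>0 < e\<close> by simp
  moreover have "sqrt (M b) \<le> Q b"
    unfolding Q_def by simp
  ultimately show "sqrt (M b) \<le> integral {0..b} \<phi> + e"
    by simp
qed

lemma sqrt_le_exp_integral_if_deriv_le:
  fixes N N' K K' \<phi> :: "real \<Rightarrow> real"
  assumes "0 \<le> b" and "N 0 = 0"
    and N_nonneg: "\<And>t. t \<in> {0..b} \<Longrightarrow> 0 \<le> N t"
    and K_nonneg: "\<And>t. t \<in> {0..b} \<Longrightarrow> 0 \<le> K t"
    and \<phi>_nonneg: "\<And>t. t \<in> {0..b} \<Longrightarrow> 0 \<le> \<phi> t"
    and N': "\<And>t. t \<in> {0..b} \<Longrightarrow> (N has_real_derivative N' t) (at t within {0..b})"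
    and K': "\<And>t. t \<in> {0..b} \<Longrightarrow> (K has_real_derivative K' t) (at t within {0..b})"
    and N'_le: "\<And>t. t \<in> {0..b} \<Longrightarrow> N' t \<le> 2 * K' t * N t + 2 * \<phi> t * sqrt (N t)"
    and \<phi>: "\<phi> integrable_on {0..b}"
  shows "sqrt (N b) \<le> exp (K b) * integral {0..b} \<phi>"
proof -
  \<comment> \<open>The factor \<open>exp (- 2 K)\<close> absorbs the linear term; \<open>K \<ge> 0\<close> allows to weaken it to \<open>exp (- K)\<close>.\<close>
  define M where "M t = exp (- 2 * K t) * N t" for t
  have sqrt_M: "sqrt (M t) = exp (- K t) * sqrt (N t)" for t
  proof -
    have "exp (- 2 * K t) = (exp (- K t))\<^sup>2"
      by (simp add: power2_eq_square exp_add[symmetric])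
    then show ?thesis
      unfolding M_def by (simp add: real_sqrt_mult)
  qed
  have "sqrt (M b) \<le> integral {0..b} \<phi>"
  proof (rule sqrt_le_integral_if_deriv_le)
    fix t assume t: "t \<in> {0..b}"
    show "(M has_real_derivative exp (- 2 * K t) * (N' t - 2 * K' t * N t)) (at t within {0..b})"
      unfolding M_def[abs_def] using N'[OF t] K'[OF t]
      by (auto intro!: derivative_eq_intros simp: algebra_simps)
    have "exp (- 2 * K t) * (N' t - 2 * K' t * N t) \<le> exp (- 2 * K t) * (2 * \<phi> t * sqrt (N t))"
      using N'_le[OF t] by (intro mult_left_mono) auto
    also have "\<dots> \<le> exp (- K t) * (2 * \<phi> t * sqrt (N t))"
      using K_nonneg[OF t] \<phi>_nonneg[OF t] N_nonneg[OF t] by (intro mult_right_mono) auto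
    also have "\<dots> = 2 * \<phi> t * sqrt (M t)"
      unfolding sqrt_M by simp
    finally show "exp (- 2 * K t) * (N' t - 2 * K' t * N t) \<le> 2 * \<phi> t * sqrt (M t)" .
  qed (use \<open>0 \<le> b\<close> \<open>N 0 = 0\<close> N_nonneg \<phi>_nonneg \<phi> in \<open>simp_all add: M_def\<close>)
  then show ?thesis
    unfolding sqrt_M by (simp add: exp_minus field_simps)
qed

section \<open>Solutions of the perturbed harmonic oscillator\<close>

lemma harmonic_energy_estimate:
  fixes h \<omega> :: real and a a\<^sub>t a\<^sub>x a\<^sub>x\<^sub>x G S :: "real \<Rightarrow> complex"
  assumes "0 < h"
    and eq: "\<And>x. \<i> * complex_of_real h * a\<^sub>t x + complex_of_real (h\<^sup>2 / 2) * a\<^sub>x\<^sub>x x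
      = complex_of_real (\<omega>\<^sup>2 / 2 * x\<^sup>2) * a x + complex_of_real (h\<^sup>2) * G x + complex_of_real (h\<^sup>2) * S x"
    and a\<^sub>x: "\<And>x. (a has_vector_derivative a\<^sub>x x) (at x)"
    and a\<^sub>x\<^sub>x: "\<And>x. (a\<^sub>x has_vector_derivative a\<^sub>x\<^sub>x x) (at x)"
    and sq: "sq_int a" "sq_int a\<^sub>x" "sq_int a\<^sub>x\<^sub>x" "sq_int a\<^sub>t" "sq_int G" "sq_int S"
  shows "(\<integral>x. Re (a\<^sub>t x * cnj (a x)) \<partial>lborel) \<le> h * (L2norm G + L2norm S) * L2norm a"
proof -
  \<comment> \<open>The harmonic potential is real, so it drops out of the imaginary part of the equation times \<open>cnj a\<close>.\<close>
  have pointwise: "h * Re (a\<^sub>t x * cnj (a x)) + h\<^sup>2 / 2 * Im (a\<^sub>x\<^sub>x x * cnj (a x))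
      = h\<^sup>2 * Im (G x * cnj (a x)) + h\<^sup>2 * Im (S x * cnj (a x))" for x
    using arg_cong[OF eq[of x], of "\<lambda>z. Im (z * cnj (a x))"]
    by (simp add: algebra_simps add_divide_distrib diff_divide_distrib)
  then have "(\<integral>x. h * Re (a\<^sub>t x * cnj (a x)) + h\<^sup>2 / 2 * Im (a\<^sub>x\<^sub>x x * cnj (a x)) \<partial>lborel)
      = (\<integral>x. h\<^sup>2 * Im (G x * cnj (a x)) + h\<^sup>2 * Im (S x * cnj (a x)) \<partial>lborel)"
    by (simp only: pointwise)
  then have "h * (\<integral>x. Re (a\<^sub>t x * cnj (a x)) \<partial>lborel) + h\<^sup>2 / 2 * (\<integral>x. Im (a\<^sub>x\<^sub>x x * cnj (a x)) \<partial>lborel)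
      = h\<^sup>2 * (\<integral>x. Im (G x * cnj (a x)) \<partial>lborel) + h\<^sup>2 * (\<integral>x. Im (S x * cnj (a x)) \<partial>lborel)"
    using integrable_Re_mult_cnj[OF sq(4,1)] integrable_Im_mult_cnj[OF sq(3,1)]
      integrable_Im_mult_cnj[OF sq(5,1)] integrable_Im_mult_cnj[OF sq(6,1)]
    by simp
  then have "h * (\<integral>x. Re (a\<^sub>t x * cnj (a x)) \<partial>lborel)
      = h * (h * ((\<integral>x. Im (G x * cnj (a x)) \<partial>lborel) + (\<integral>x. Im (S x * cnj (a x)) \<partial>lborel)))"
    using integral_Im_second_deriv_mult_cnj_eq_0[OF a\<^sub>x a\<^sub>x\<^sub>x sq(1-3)]
    by (simp add: power2_eq_square algebra_simps)
  then have "(\<integral>x. Re (a\<^sub>t x * cnj (a x)) \<partial>lborel)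
      = h * ((\<integral>x. Im (G x * cnj (a x)) \<partial>lborel) + (\<integral>x. Im (S x * cnj (a x)) \<partial>lborel))"
    using \<open>0 < h\<close> by simp
  also have "\<dots> \<le> h * (L2norm G * L2norm a + L2norm S * L2norm a)"
    using abs_integral_Im_mult_cnj_le[OF sq(5,1)] abs_integral_Im_mult_cnj_le[OF sq(6,1)] \<open>0 < h\<close>
    by (intro mult_left_mono add_mono) auto
  finally show ?thesis
    by (simp add: algebra_simps)
qed

lemma harmonic_solution_energy_inequality:
  assumes sol: "harmonic_solution \<omega> h T a G S" and "0 < h"
  obtains N' where
    "\<And>t. t \<in> {0..<T} \<Longrightarrow> ((\<lambda>t. (L2norm (a t))\<^sup>2) has_real_derivative N' t) (at t within {0..<T})"
    "\<And>t. t \<in> {0..<T} \<Longrightarrow> N' t \<le> 2 * h * (L2norm (G t) + L2norm (S t)) * L2norm (a t)"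
proof -
  obtain a\<^sub>t a\<^sub>x a\<^sub>x\<^sub>x :: "real \<Rightarrow> real \<Rightarrow> complex" where
    deriv_x: "\<forall>t\<in>{0..<T}. \<forall>x. (a t has_vector_derivative a\<^sub>x t x) (at x)
      \<and> (a\<^sub>x t has_vector_derivative a\<^sub>x\<^sub>x t x) (at x)" and
    eq: "\<forall>t\<in>{0..<T}. \<forall>x. \<i> * complex_of_real h * a\<^sub>t t x + complex_of_real (h\<^sup>2 / 2) * a\<^sub>x\<^sub>x t x
      = complex_of_real (\<omega>\<^sup>2 / 2 * x\<^sup>2) * a t x + complex_of_real (h\<^sup>2) * G t x
        + complex_of_real (h\<^sup>2) * S t x" and
    sq: "\<forall>t\<in>{0..<T}. sq_int (a t) \<and> sq_int (a\<^sub>x t) \<and> sq_int (a\<^sub>x\<^sub>x t)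
      \<and> sq_int (\<lambda>x. complex_of_real (x\<^sup>2) * a t x) \<and> sq_int (a\<^sub>t t) \<and> sq_int (G t) \<and> sq_int (S t)" and
    deriv_t: "\<forall>t\<in>{0..<T}. ((\<lambda>s. L2norm (\<lambda>x. (a s x - a t x) / complex_of_real (s - t) - a\<^sub>t t x))
      \<longlongrightarrow> 0) (at t within {0..<T})"
    using sol unfolding harmonic_solution_def by blast
  show thesis
  proof
    fix t
    assume "t \<in> {0..<T}"
    then show "((\<lambda>t. (L2norm (a t))\<^sup>2) has_real_derivative 2 * (\<integral>x. Re (a\<^sub>t t x * cnj (a t x)) \<partial>lborel))
        (at t within {0..<T})"
      using sq deriv_t by (intro L2norm_power2_has_derivative) auto
    show "2 * (\<integral>x. Re (a\<^sub>t t x * cnj (a t x)) \<partial>lborel) \<le> 2 * h * (L2norm (G t) + L2norm (S t)) * L2norm (a t)"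
      using harmonic_energy_estimate[OF \<open>0 < h\<close>] eq deriv_x sq \<open>t \<in> {0..<T}\<close> by fastforce
  qed
qed

lemma harmonic_solution_L2norm_le:
  assumes sol: "harmonic_solution \<omega> h T a G S" and "0 < h" "0 \<le> C0"
    and G_le: "\<And>t. t \<in> {0..<T} \<Longrightarrow> L2norm (G t) \<le> C0 / (T - t)\<^sup>2 * L2norm (a t)"
    and "0 \<le> b" "b < T" and S: "(\<lambda>t. L2norm (S t)) integrable_on {0..b}"
  shows "L2norm (a b) \<le> exp (h * C0 / (T - b)) * (h * integral {0..b} (\<lambda>t. L2norm (S t)))"
proof -
  obtain N' where N': "\<And>t. t \<in> {0..<T} \<Longrightarrow>
      ((\<lambda>t. (L2norm (a t))\<^sup>2) has_real_derivative N' t) (at t within {0..<T})"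
    and N'_le: "\<And>t. t \<in> {0..<T} \<Longrightarrow> N' t \<le> 2 * h * (L2norm (G t) + L2norm (S t)) * L2norm (a t)"
    using harmonic_solution_energy_inequality[OF sol \<open>0 < h\<close>] by blast
  define N where "N t = (L2norm (a t))\<^sup>2" for t
  have "a 0 = (\<lambda>_. 0)"
    using sol unfolding harmonic_solution_def by auto
  then have "N 0 = 0"
    by (simp add: N_def L2norm_def)
  have sub: "{0..b} \<subseteq> {0..<T}"
    using \<open>b < T\<close> by auto
  have "sqrt (N b) \<le> exp (h * C0 / (T - b)) * integral {0..b} (\<lambda>t. h * L2norm (S t))"
  proof (rule sqrt_le_exp_integral_if_deriv_le[where K' = "\<lambda>t. h * C0 / (T - t)\<^sup>2"])
    fix t
    assume "t \<in> {0..b}"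
    then have t: "t \<in> {0..<T}"
      using sub by auto
    show "(N has_real_derivative N' t) (at t within {0..b})"
      unfolding N_def[abs_def] using N'[OF t] by (rule DERIV_subset[OF _ sub])
    show "((\<lambda>t. h * C0 / (T - t)) has_real_derivative h * C0 / (T - t)\<^sup>2) (at t within {0..b})"
      using t by (auto intro!: derivative_eq_intros simp: power2_eq_square)
    show "0 \<le> h * C0 / (T - t)"
      using \<open>0 < h\<close> \<open>0 \<le> C0\<close> t by simp
    have "N' t \<le> 2 * h * (C0 / (T - t)\<^sup>2 * L2norm (a t) + L2norm (S t)) * L2norm (a t)"
      using N'_le[OF t] G_le[OF t] \<open>0 < h\<close> L2norm_nonneg[of "a t"]
      by (elim order_trans) (intro mult_right_mono mult_left_mono; simp)
    then show "N' t \<le> 2 * (h * C0 / (T - t)\<^sup>2) * N t + 2 * (h * L2norm (S t)) * sqrt (N t)"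
      unfolding N_def using L2norm_nonneg[of "a t"] by (simp add: power2_eq_square algebra_simps)
  qed (use \<open>N 0 = 0\<close> \<open>0 \<le> b\<close> \<open>0 < h\<close> S in \<open>auto simp: N_def L2norm_nonneg integrable_on_mult_right\<close>)
  then show ?thesis
    unfolding N_def using L2norm_nonneg[of "a b"] by simp
qed

lemma harmonic_solution_source_L2norm_measurable:
  assumes "harmonic_solution \<omega> h T a G S"
  shows "(\<lambda>t. L2norm (S t)) \<in> borel_measurable lborel"
proof -
  have "(\<lambda>(t, x). (cmod (S t x))\<^sup>2) \<in> borel_measurable (lborel \<Otimes>\<^sub>M lborel)"
    using assms unfolding harmonic_solution_def by (auto simp: case_prod_beta')
  then have "(\<lambda>t. \<integral>x. (cmod (S t x))\<^sup>2 \<partial>lborel) \<in> borel_measurable lborel"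
    by (rule lborel.borel_measurable_lebesgue_integral)
  then show ?thesis
    unfolding L2norm_def by measurable
qed

lemma integrable_on_integral_le_set_nn_integral:
  fixes f :: "real \<Rightarrow> real"
  assumes f: "f \<in> borel_measurable lborel" "\<And>x. 0 \<le> f x"
    and "{a..b} \<subseteq> A" and finite: "(\<integral>\<^sup>+x\<in>A. f x \<partial>lborel) < \<infinity>"
  shows "f integrable_on {a..b} \<and> ennreal (integral {a..b} f) \<le> (\<integral>\<^sup>+x\<in>A. f x \<partial>lborel)"
proof -
  define g where "g x = (if x \<in> {a..b} then f x else 0)" for x
  have g_le: "(\<integral>\<^sup>+x. g x \<partial>lborel) \<le> (\<integral>\<^sup>+x\<in>A. f x \<partial>lborel)"
    using \<open>{a..b} \<subseteq> A\<close> by (intro nn_integral_mono) (auto simp: g_def split: split_indicator)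
  then obtain r where r: "(\<integral>\<^sup>+x. g x \<partial>lborel) = ennreal r" "0 \<le> r"
    using finite by (cases "\<integral>\<^sup>+x. g x \<partial>lborel" rule: ennreal_cases) auto
  have "(g has_integral r) UNIV"
    using f r unfolding g_def by (intro nn_integral_has_integral) auto
  then have "(f has_integral r) {a..b}"
    unfolding g_def has_integral_restrict_UNIV .
  then show ?thesis
    using g_le r by (auto simp: integral_unique)
qed

lemma harmonic_solution_L2norm_le_nn_integral:
  assumes sol: "harmonic_solution \<omega> h T a G S" and "0 < h" "0 \<le> C0"
    and G_le: "\<And>t. t \<in> {0..<T} \<Longrightarrow> L2norm (G t) \<le> C0 / (T - t)\<^sup>2 * L2norm (a t)"
    and "0 \<le> t" "t \<le> b" "h \<le> T - b"
  shows "ennreal (L2norm (a t)) \<le> ennreal (exp C0 * h) * (\<integral>\<^sup>+\<tau>\<in>{0..b}. ennreal (L2norm (S \<tau>)) \<partial>lborel)"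
proof (cases "(\<integral>\<^sup>+\<tau>\<in>{0..b}. ennreal (L2norm (S \<tau>)) \<partial>lborel) = \<infinity>")
  case True
  then show ?thesis
    using \<open>0 < h\<close> by (simp add: ennreal_mult_top)
next
  case False
  define I where "I = integral {0..t} (\<lambda>\<tau>. L2norm (S \<tau>))"
  from False have "(\<lambda>\<tau>. L2norm (S \<tau>)) integrable_on {0..t}
    \<and> ennreal I \<le> (\<integral>\<^sup>+\<tau>\<in>{0..b}. ennreal (L2norm (S \<tau>)) \<partial>lborel)"
    unfolding I_def using \<open>t \<le> b\<close>
    by (intro integrable_on_integral_le_set_nn_integral[OF harmonic_solution_source_L2norm_measurable[OF sol]
          L2norm_nonneg]) (auto simp: top.not_eq_extremum)
  then have S: "(\<lambda>\<tau>. L2norm (S \<tau>)) integrable_on {0..t}"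
    and S_le: "ennreal I \<le> (\<integral>\<^sup>+\<tau>\<in>{0..b}. ennreal (L2norm (S \<tau>)) \<partial>lborel)"
    by auto
  have "0 \<le> I"
    unfolding I_def using S by (simp add: integral_nonneg L2norm_nonneg)
  have "h \<le> T - t" and "t < T"
    using \<open>t \<le> b\<close> \<open>h \<le> T - b\<close> \<open>0 < h\<close> by linarith+
  have "L2norm (a t) \<le> exp (h * C0 / (T - t)) * (h * I)"
    unfolding I_def by (rule harmonic_solution_L2norm_le[OF sol \<open>0 < h\<close> \<open>0 \<le> C0\<close> G_le \<open>0 \<le> t\<close> \<open>t < T\<close> S])
  also have "\<dots> \<le> exp C0 * (h * I)"
  proof (intro mult_right_mono)
    show "exp (h * C0 / (T - t)) \<le> exp C0"
      using \<open>h \<le> T - t\<close> \<open>0 < h\<close> \<open>0 \<le> C0\<close> by (simp add: divide_le_eq mult.commute mult_left_mono)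
  qed (use \<open>0 < h\<close> \<open>0 \<le> I\<close> in simp)
  finally have "ennreal (L2norm (a t)) \<le> ennreal (exp C0 * h) * ennreal I"
    using \<open>0 < h\<close> \<open>0 \<le> I\<close> by (simp add: ennreal_mult[symmetric] mult.assoc ennreal_leI)
  also have "\<dots> \<le> ennreal (exp C0 * h) * (\<integral>\<^sup>+\<tau>\<in>{0..b}. ennreal (L2norm (S \<tau>)) \<partial>lborel)"
    using S_le by (rule mult_left_mono) simp
  finally show ?thesis .
qed

theorem lemma4p7:
  fixes \<omega> :: real
    and a :: "real \<Rightarrow> real \<Rightarrow> real \<Rightarrow> complex"
    and F :: "real \<Rightarrow> (real \<Rightarrow> real \<Rightarrow> complex) \<Rightarrow> real \<Rightarrow> real \<Rightarrow> complex"
    and S :: "real \<Rightarrow> real \<Rightarrow> real \<Rightarrow> complex"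
  assumes "\<omega> > 0"
    and sol: "\<And>h. h \<in> {0<..1} \<Longrightarrow> harmonic_solution \<omega> h (pi / (2 * \<omega>)) (a h) (F h (a h)) (S h)"
    and bound: "\<exists>C0>0. \<forall>h\<in>{0<..1}. \<forall>t\<in>{0..<pi / (2 * \<omega>)}.
                 L2norm (F h (a h) t) \<le> C0 / (pi / (2 * \<omega>) - t)\<^sup>2 * L2norm (a h t)"
  shows "\<exists>C>0. \<forall>h\<in>{0<..1}. \<forall>\<Lambda>\<ge>1. \<forall>t\<in>{0..pi / (2 * \<omega>) - \<Lambda> * h}.
           ennreal (L2norm (a h t))
             \<le> ennreal (C * h) * (\<integral>\<^sup>+ s\<in>{0..pi / (2 * \<omega>) - \<Lambda> * h}. ennreal (L2norm (S h s)) \<partial>lborel)"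
proof -
  define T where "T = pi / (2 * \<omega>)"
  obtain C0 where "C0 > 0" and G_le: "\<And>h t. h \<in> {0<..1} \<Longrightarrow> t \<in> {0..<T} \<Longrightarrow>
      L2norm (F h (a h) t) \<le> C0 / (T - t)\<^sup>2 * L2norm (a h t)"
    using bound unfolding T_def by blast
  have "ennreal (L2norm (a h t))
      \<le> ennreal (exp C0 * h) * (\<integral>\<^sup>+ s\<in>{0..T - \<Lambda> * h}. ennreal (L2norm (S h s)) \<partial>lborel)"
    if h: "h \<in> {0<..1}" and "1 \<le> \<Lambda>" and t: "t \<in> {0..T - \<Lambda> * h}" for h \<Lambda> t
  proof (rule harmonic_solution_L2norm_le_nn_integral[OF _ _ _ G_le[OF h]])
    show "harmonic_solution \<omega> h T (a h) (F h (a h)) (S h)"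
      using sol[OF h] unfolding T_def .
    show "h \<le> T - (T - \<Lambda> * h)"
      using h \<open>1 \<le> \<Lambda>\<close> by simp
  qed (use h t \<open>C0 > 0\<close> in auto)
  then show ?thesis
    unfolding T_def[symmetric] by (intro exI[of _ "exp C0"]) auto
qed

end
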